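(* Let $(X,\mathcal{A})$ be a $(v,k,\lambda)$-BIBD. Then $(X,\mathcal{A})$ has a perfect nesting if and only if $(X,\mathcal{A})$ is a Banff design having an exact colouring.
   Context: A $(v,k,\lambda)$-BIBD is a pair $(X,\mathcal{A})$ where $X$ is a set of $v$ points and $\mathcal{A}$ is a multiset of $k$-subsets of $X$ (blocks) such that every pair of distinct points lies in exactly $\lambda$ blocks. A perfect nesting of $(X,\mathcal{A})$ is a map $\phi:\mathcal{A}\to X$ with $\phi(A)\notin A$ for all $A$ such that $(X,\{A\cup\{\phi(A)\}:A\in\mathcal{A}\})$ is a $(v,k+1,\lambda+1)$-BIBD. The Levi graph $\mathcal{L}(X,\mathcal{A})$ is the bipartite graph with vertex set $X\cup\mathcal{A}$ (each block a separate vertex) and an edge $\{x,A\}$ whenever $x\in A$. A harmonious colouring of a graph is a map $c$ from vertices to colours such that adjacent vertices receive different colours and no two distinct edges receive the same unordered pair of colours; the harmonious chromatic number $h$ is the minimum number of colours in a harmonious colouring. $(X,\mathcal{A})$ is a Banff design if $h(\mathcal{L}(X,\mathcal{A}))=v$; a Banff design has an exact colouring if there is a harmonious colouring of $\mathcal{L}(X,\mathcal{A})$ with $v$ colours in which every pair of distinct colours occurs on exactly one edge. *)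

theory Defs
  imports Main
begin

text \<open>A design: point set X, blocks given as an indexed family B over a finite index
  set I (this represents the multiset of blocks; repeated blocks = distinct indices).\<close>

definition bibd :: "'a set \<Rightarrow> 'b set \<Rightarrow> ('b \<Rightarrow> 'a set) \<Rightarrow> nat \<Rightarrow> nat \<Rightarrow> nat \<Rightarrow> bool" where
  "bibd X I B v k lam \<longleftrightarrow>
     finite X \<and> card X = v \<and> finite I \<and>
     (\<forall>i\<in>I. B i \<subseteq> X \<and> card (B i) = k) \<and>
     (\<forall>x\<in>X. \<forall>y\<in>X. x \<noteq> y \<longrightarrow> card {i\<in>I. x \<in> B i \<and> y \<in> B i} = lam)"

definition perfect_nesting :: "'a set \<Rightarrow> 'b set \<Rightarrow> ('b \<Rightarrow> 'a set) \<Rightarrow> nat \<Rightarrow> nat \<Rightarrow> nat \<Rightarrow> ('b \<Rightarrow> 'a) \<Rightarrow> bool" where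
  "perfect_nesting X I B v k lam \<phi> \<longleftrightarrow>
     (\<forall>i\<in>I. \<phi> i \<in> X \<and> \<phi> i \<notin> B i) \<and>
     bibd X I (\<lambda>i. insert (\<phi> i) (B i)) v (k + 1) (lam + 1)"

definition levi_vertices :: "'a set \<Rightarrow> 'b set \<Rightarrow> ('a + 'b) set" where
  "levi_vertices X I = Inl ` X \<union> Inr ` I"

definition levi_edges :: "'a set \<Rightarrow> 'b set \<Rightarrow> ('b \<Rightarrow> 'a set) \<Rightarrow> ('a + 'b) set set" where
  "levi_edges X I B = {{Inl x, Inr i} | x i. x \<in> X \<and> i \<in> I \<and> x \<in> B i}"

definition harmonious :: "'v set \<Rightarrow> 'v set set \<Rightarrow> ('v \<Rightarrow> nat) \<Rightarrow> bool" where
  "harmonious V E c \<longleftrightarrow>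
     (\<forall>e\<in>E. \<forall>x\<in>e. \<forall>y\<in>e. x \<noteq> y \<longrightarrow> c x \<noteq> c y) \<and>
     (\<forall>e\<in>E. \<forall>e'\<in>E. c ` e = c ` e' \<longrightarrow> e = e')"

definition harmonious_number :: "'v set \<Rightarrow> 'v set set \<Rightarrow> nat" where
  "harmonious_number V E = (LEAST n. \<exists>c. harmonious V E c \<and> card (c ` V) = n)"

definition banff :: "'a set \<Rightarrow> 'b set \<Rightarrow> ('b \<Rightarrow> 'a set) \<Rightarrow> nat \<Rightarrow> bool" where
  "banff X I B v \<longleftrightarrow> harmonious_number (levi_vertices X I) (levi_edges X I B) = v"

definition exact_colouring :: "'a set \<Rightarrow> 'b set \<Rightarrow> ('b \<Rightarrow> 'a set) \<Rightarrow> nat \<Rightarrow> (('a + 'b) \<Rightarrow> nat) \<Rightarrow> bool" where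
  "exact_colouring X I B v c \<longleftrightarrow>
     harmonious (levi_vertices X I) (levi_edges X I B) c \<and>
     card (c ` levi_vertices X I) = v \<and>
     (\<forall>a\<in>c ` levi_vertices X I. \<forall>b\<in>c ` levi_vertices X I. a \<noteq> b \<longrightarrow>
        (\<exists>!e. e \<in> levi_edges X I B \<and> c ` e = {a, b}))"

end

theory Submission
  imports Defs
begin

text \<open>
  Call a pair (x, i) with x \<in> B i a flag; flags are the edges of the Levi graph. A perfect
  nesting \<phi> amounts to a bijection from the flags onto the 2-subsets of X, sending (x, i) to
  {x, \<phi> i}, and an exact colouring with v colours amounts to a bijection from the flags onto
  the 2-subsets of the colour set, sending a flag to the colours of its two ends. Colouring
  block i like the point \<phi> i turns the first bijection into the second. Conversely, if the
  points get pairwise distinct colours, the colour of block i names the point \<phi> i.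

  If two points share a colour, they lie in no common block, so \<lambda> = 0 and all blocks are
  singletons {pt i}. Exactly one colour \<zeta> is then missing on the points. Orienting each flag
  from its point colour to its block colour gives a tournament on the colours in which \<zeta> is
  a sink; moving the tails of the arcs of the blocks at one of the two points from their
  common colour to \<zeta> yields a tournament realised by a point-injective recolouring, and the
  previous case applies.

  The Banff property is counting: a harmonious colouring with n colours has at most
  n choose 2 edges, and an exact one with v colours has exactly v choose 2.
\<close>

definition two_subsets :: "'a set \<Rightarrow> 'a set set" where
  "two_subsets S = {T. T \<subseteq> S \<and> card T = 2}"

lemma card_two_subsets: "finite S \<Longrightarrow> card (two_subsets S) = card S choose 2"
  unfolding two_subsets_def by (rule n_subsets)

lemma finite_two_subsets: "finite S \<Longrightarrow> finite (two_subsets S)"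
  unfolding two_subsets_def by simp

lemma two_subsets_iff: "T \<in> two_subsets S \<longleftrightarrow> (\<exists>a b. T = {a, b} \<and> a \<noteq> b \<and> a \<in> S \<and> b \<in> S)"
  unfolding two_subsets_def card_2_iff by auto

lemma ball_two_subsets_iff: "(\<forall>T\<in>two_subsets S. P T) \<longleftrightarrow> (\<forall>a\<in>S. \<forall>b\<in>S. a \<noteq> b \<longrightarrow> P {a, b})"
  unfolding Ball_def two_subsets_iff by blast

lemma two_subset_eq_insert_other:
  assumes "T \<in> two_subsets S" and "a \<in> T"
  shows "T = {a, the_elem (T - {a})}" and "the_elem (T - {a}) \<noteq> a" and "the_elem (T - {a}) \<in> S"
proof -
  obtain x y where xy: "T = {x, y}" "x \<noteq> y" "x \<in> S" "y \<in> S"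
    using assms(1) unfolding two_subsets_iff by blast
  obtain b where b: "T - {a} = {b}" "T = {a, b}" "b \<in> S"
  proof (cases "a = x")
    case True
    then show ?thesis
      using xy that[of y] by auto
  next
    case False
    then have "a = y"
      using xy assms(2) by auto
    then show ?thesis
      using xy that[of x] by auto
  qed
  moreover have "b \<noteq> a"
    using b(1) by blast
  ultimately show "T = {a, the_elem (T - {a})}" and "the_elem (T - {a}) \<noteq> a" and "the_elem (T - {a}) \<in> S"
    by simp_all
qed

lemma bij_betw_image_two_subsets:
  assumes "bij_betw f A B"
  shows "bij_betw (image f) (two_subsets A) (two_subsets B)"
proof -
  have Pow: "bij_betw (image f) (Pow A) (Pow B)"
    using assms by (rule bij_betw_Pow)
  have card: "card (f ` T) = card T" if "T \<subseteq> A" for T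
    using that assms by (meson bij_betw_imp_inj_on card_image inj_on_subset)
  have "inj_on (image f) (two_subsets A)"
    using Pow unfolding bij_betw_def two_subsets_def by (auto intro: inj_on_subset)
  moreover have "image f ` two_subsets A = two_subsets B"
  proof
    show "image f ` two_subsets A \<subseteq> two_subsets B"
      using Pow card unfolding bij_betw_def two_subsets_def by auto
    show "two_subsets B \<subseteq> image f ` two_subsets A"
    proof
      fix S assume S: "S \<in> two_subsets B"
      then obtain T where "T \<subseteq> A" "S = f ` T"
        using Pow unfolding bij_betw_def two_subsets_def by (metis (no_types, lifting) Pow_iff imageE mem_Collect_eq)
      then show "S \<in> image f ` two_subsets A"
        using S card unfolding two_subsets_def by auto
    qed
  qed
  ultimately show ?thesis
    unfolding bij_betw_def ..
qed

lemma card_fibre_eq_1_iff: "card {a\<in>A. f a = b} = 1 \<longleftrightarrow> (\<exists>!a. a \<in> A \<and> f a = b)"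
proof
  assume "card {a\<in>A. f a = b} = 1"
  then obtain a where "{a\<in>A. f a = b} = {a}"
    by (auto simp: card_1_singleton_iff)
  then show "\<exists>!a. a \<in> A \<and> f a = b"
    by (auto simp: set_eq_iff)
next
  assume "\<exists>!a. a \<in> A \<and> f a = b"
  then obtain a where "{a\<in>A. f a = b} = {a}"
    by blast
  then show "card {a\<in>A. f a = b} = 1"
    by simp
qed

lemma bij_betw_iff_card_fibres:
  "bij_betw f A B \<longleftrightarrow> f ` A \<subseteq> B \<and> (\<forall>b\<in>B. card {a\<in>A. f a = b} = 1)"
proof
  assume "bij_betw f A B"
  then show "f ` A \<subseteq> B \<and> (\<forall>b\<in>B. card {a\<in>A. f a = b} = 1)"
    unfolding card_fibre_eq_1_iff bij_betw_def inj_on_def by auto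
next
  assume fibres: "f ` A \<subseteq> B \<and> (\<forall>b\<in>B. card {a\<in>A. f a = b} = 1)"
  then have "inj_on f A"
    unfolding card_fibre_eq_1_iff by (intro inj_onI) (metis image_subset_iff)
  moreover have "f ` A = B"
    using fibres unfolding card_fibre_eq_1_iff by force
  ultimately show "bij_betw f A B"
    unfolding bij_betw_def ..
qed

lemma ex1_iff_mem_image: "inj_on f A \<Longrightarrow> (\<exists>!x. x \<in> A \<and> f x = y) \<longleftrightarrow> y \<in> f ` A"
  unfolding inj_on_def by blast

definition flags :: "'a set \<Rightarrow> 'b set \<Rightarrow> ('b \<Rightarrow> 'a set) \<Rightarrow> ('a \<times> 'b) set" where
  "flags X I B = {(x, i). x \<in> X \<and> i \<in> I \<and> x \<in> B i}"

definition flag_colours :: "('a + 'b \<Rightarrow> 'c) \<Rightarrow> 'a \<times> 'b \<Rightarrow> 'c set" where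
  "flag_colours c = (\<lambda>(x, i). {c (Inl x), c (Inr i)})"

definition nested_pair :: "('b \<Rightarrow> 'a) \<Rightarrow> 'a \<times> 'b \<Rightarrow> 'a set" where
  "nested_pair \<phi> = (\<lambda>(x, i). {x, \<phi> i})"

lemma finite_levi_vertices: "finite X \<Longrightarrow> finite I \<Longrightarrow> finite (levi_vertices X I)"
  unfolding levi_vertices_def by simp

lemma levi_edges_eq_image_flags:
  "levi_edges X I B = (\<lambda>(x, i). {Inl x, Inr i}) ` flags X I B"
  unfolding levi_edges_def flags_def by auto

lemma flag_colours_in_two_subsets_iff:
  assumes "p \<in> flags X I B"
  shows "flag_colours c p \<in> two_subsets (c ` levi_vertices X I) \<longleftrightarrow> c (Inl (fst p)) \<noteq> c (Inr (snd p))"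
  using assms unfolding flags_def flag_colours_def levi_vertices_def two_subsets_def
  by (auto simp: card_insert_if)

lemma proper_on_levi_edges_iff:
  "(\<forall>e\<in>levi_edges X I B. \<forall>p\<in>e. \<forall>q\<in>e. p \<noteq> q \<longrightarrow> c p \<noteq> c q) \<longleftrightarrow>
     (\<forall>p\<in>flags X I B. c (Inl (fst p)) \<noteq> c (Inr (snd p)))"
  unfolding levi_edges_eq_image_flags by fastforce

lemma image_levi_edges: "image c ` levi_edges X I B = flag_colours c ` flags X I B"
  unfolding levi_edges_eq_image_flags flag_colours_def image_image by (simp add: case_prod_unfold)

lemma inj_on_image_levi_edges_iff:
  "inj_on (image c) (levi_edges X I B) \<longleftrightarrow> inj_on (flag_colours c) (flags X I B)"
proof -
  define edge where "edge = (\<lambda>(x, i). {Inl x, Inr i} :: ('a + 'b) set)"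
  have "inj_on edge (flags X I B)"
    unfolding edge_def by (auto intro!: inj_onI simp: doubleton_eq_iff)
  moreover have "image c \<circ> edge = flag_colours c"
    unfolding edge_def flag_colours_def by auto
  ultimately show ?thesis
    unfolding levi_edges_eq_image_flags edge_def[symmetric] using comp_inj_on_iff by metis
qed

lemma harmonious_levi_iff:
  "harmonious (levi_vertices X I) (levi_edges X I B) c \<longleftrightarrow>
     flag_colours c ` flags X I B \<subseteq> two_subsets (c ` levi_vertices X I) \<and>
     inj_on (flag_colours c) (flags X I B)"
proof -
  have "(\<forall>e\<in>levi_edges X I B. \<forall>p\<in>e. \<forall>q\<in>e. p \<noteq> q \<longrightarrow> c p \<noteq> c q) \<longleftrightarrow>
      flag_colours c ` flags X I B \<subseteq> two_subsets (c ` levi_vertices X I)"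
    unfolding proper_on_levi_edges_iff using flag_colours_in_two_subsets_iff[of _ X I B c] by blast
  moreover have "(\<forall>e\<in>levi_edges X I B. \<forall>e'\<in>levi_edges X I B. c ` e = c ` e' \<longrightarrow> e = e') \<longleftrightarrow>
      inj_on (flag_colours c) (flags X I B)"
    by (simp only: inj_on_image_levi_edges_iff[symmetric] inj_on_def[of "image c"])
  ultimately show ?thesis
    unfolding harmonious_def by (rule arg_cong2[where f = conj])
qed

lemma exact_colouring_iff:
  "exact_colouring X I B v c \<longleftrightarrow>
     card (c ` levi_vertices X I) = v \<and>
     bij_betw (flag_colours c) (flags X I B) (two_subsets (c ` levi_vertices X I))"
proof (cases "inj_on (flag_colours c) (flags X I B)")
  case True
  let ?C = "c ` levi_vertices X I"
  have "inj_on (image c) (levi_edges X I B)"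
    using True by (simp add: inj_on_image_levi_edges_iff)
  then have unique: "(\<exists>!e. e \<in> levi_edges X I B \<and> c ` e = T) \<longleftrightarrow> T \<in> flag_colours c ` flags X I B" for T
    unfolding image_levi_edges[symmetric] by (rule ex1_iff_mem_image)
  have exact: "(\<forall>a\<in>?C. \<forall>b\<in>?C. a \<noteq> b \<longrightarrow> (\<exists>!e. e \<in> levi_edges X I B \<and> c ` e = {a, b})) \<longleftrightarrow>
      two_subsets ?C \<subseteq> flag_colours c ` flags X I B"
    by (simp only: subset_eq ball_two_subsets_iff unique)
  show ?thesis
    using True unfolding exact_colouring_def harmonious_levi_iff exact bij_betw_def
      set_eq_subset[of "flag_colours c ` flags X I B"] by argo
next
  case False
  then show ?thesis
    unfolding exact_colouring_def harmonious_levi_iff bij_betw_def by argo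
qed

lemma card_flags_le_harmonious:
  assumes "finite X" "finite I" and "harmonious (levi_vertices X I) (levi_edges X I B) c"
  shows "card (flags X I B) \<le> card (c ` levi_vertices X I) choose 2"
proof -
  have "card (flags X I B) = card (flag_colours c ` flags X I B)"
    using assms(3) unfolding harmonious_levi_iff by (simp add: card_image)
  also have "\<dots> \<le> card (two_subsets (c ` levi_vertices X I))"
    using assms unfolding harmonious_levi_iff
    by (intro card_mono finite_two_subsets finite_imageI finite_levi_vertices) auto
  also have "\<dots> = card (c ` levi_vertices X I) choose 2"
    using assms by (simp add: card_two_subsets finite_levi_vertices)
  finally show ?thesis .
qed

lemma card_flags_exact_colouring:
  assumes "finite X" "finite I" and "exact_colouring X I B v c"
  shows "card (flags X I B) = v choose 2"
  using assms bij_betw_same_card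
  by (fastforce simp: exact_colouring_iff card_two_subsets finite_levi_vertices)

lemma choose_two_le_imp_le:
  fixes m n :: nat
  assumes "1 \<le> n" and "m choose 2 \<le> n choose 2"
  shows "m \<le> n"
proof (rule ccontr)
  assume "\<not> m \<le> n"
  then have "Suc n choose 2 \<le> m choose 2"
    by (intro binomial_right_mono) simp
  moreover have "Suc n choose 2 = n + (n choose 2)"
    by (simp add: numeral_2_eq_2)
  ultimately show False
    using assms by simp
qed

lemma exact_colouring_imp_banff:
  assumes "finite X" "finite I" and exact: "exact_colouring X I B v c"
  shows "banff X I B v"
proof -
  let ?V = "levi_vertices X I" and ?E = "levi_edges X I B"
  have "v \<le> n" if "harmonious ?V ?E c'" "card (c' ` ?V) = n" for c' n
  proof (cases "v = 0")
    case False
    then have "?V \<noteq> {}"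
      using exact unfolding exact_colouring_def by auto
    then have "0 < card (c' ` ?V)"
      using finite_levi_vertices[OF assms(1,2)] by (simp add: card_gt_0_iff)
    then have "1 \<le> n"
      using that(2) by simp
    moreover have "v choose 2 \<le> n choose 2"
      using card_flags_le_harmonious[OF assms(1,2) that(1)] card_flags_exact_colouring[OF assms] that(2)
      by simp
    ultimately show ?thesis
      by (rule choose_two_le_imp_le)
  qed simp
  moreover have "harmonious ?V ?E c \<and> card (c ` ?V) = v"
    using exact unfolding exact_colouring_def by simp
  ultimately show ?thesis
    unfolding banff_def harmonious_number_def by (intro Least_equality) blast+
qed

lemma card_pairs_in_nested_blocks:
  assumes "bibd X I B v k lam" and "\<forall>i\<in>I. \<phi> i \<notin> B i" and "a \<in> X" "b \<in> X" "a \<noteq> b"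
  shows "card {i\<in>I. a \<in> insert (\<phi> i) (B i) \<and> b \<in> insert (\<phi> i) (B i)} =
    lam + card {p\<in>flags X I B. nested_pair \<phi> p = {a, b}}"
proof -
  let ?old = "{i\<in>I. a \<in> B i \<and> b \<in> B i}"
  let ?new = "{i\<in>I. (\<phi> i = a \<and> b \<in> B i) \<or> (\<phi> i = b \<and> a \<in> B i)}"
  have "finite I" and "card ?old = lam" and "\<forall>i\<in>I. B i \<subseteq> X"
    using assms unfolding bibd_def by auto
  have "bij_betw snd {p\<in>flags X I B. nested_pair \<phi> p = {a, b}} ?new"
    unfolding bij_betw_def inj_on_def flags_def nested_pair_def
    using assms(2-5) \<open>\<forall>i\<in>I. B i \<subseteq> X\<close> by (auto simp: doubleton_eq_iff image_iff)
  then have "card ?new = card {p\<in>flags X I B. nested_pair \<phi> p = {a, b}}"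
    by (simp add: bij_betw_same_card)
  moreover have "{i\<in>I. a \<in> insert (\<phi> i) (B i) \<and> b \<in> insert (\<phi> i) (B i)} = ?old \<union> ?new"
    and "?old \<inter> ?new = {}"
    using assms(2,5) by auto
  ultimately show ?thesis
    using \<open>finite I\<close> \<open>card ?old = lam\<close> by (simp add: card_Un_disjoint)
qed

lemma perfect_nesting_iff:
  assumes bibd: "bibd X I B v k lam"
  shows "perfect_nesting X I B v k lam \<phi> \<longleftrightarrow>
    (\<forall>i\<in>I. \<phi> i \<in> X - B i) \<and> bij_betw (nested_pair \<phi>) (flags X I B) (two_subsets X)"
proof (cases "\<forall>i\<in>I. \<phi> i \<in> X - B i")
  case True
  have blocks: "\<forall>i\<in>I. B i \<subseteq> X \<and> card (B i) = k" and "finite X"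
    using bibd unfolding bibd_def by auto
  then have "finite (B i)" if "i \<in> I" for i
    using that finite_subset by blast
  then have "\<forall>i\<in>I. insert (\<phi> i) (B i) \<subseteq> X \<and> card (insert (\<phi> i) (B i)) = k + 1"
    using True blocks by auto
  then have "bibd X I (\<lambda>i. insert (\<phi> i) (B i)) v (k + 1) (lam + 1) \<longleftrightarrow>
      (\<forall>a\<in>X. \<forall>b\<in>X. a \<noteq> b \<longrightarrow> card {p\<in>flags X I B. nested_pair \<phi> p = {a, b}} = 1)"
    using bibd card_pairs_in_nested_blocks[OF bibd] True unfolding bibd_def by auto
  moreover have "nested_pair \<phi> ` flags X I B \<subseteq> two_subsets X"
    using True blocks unfolding nested_pair_def flags_def two_subsets_def by (auto simp: card_insert_if)
  ultimately show ?thesis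
    using True unfolding perfect_nesting_def bij_betw_iff_card_fibres ball_two_subsets_iff by auto
qed (auto simp: perfect_nesting_def)

lemma perfect_nesting_imp_exact_colouring:
  assumes bibd: "bibd X I B v k lam" and nesting: "perfect_nesting X I B v k lam \<phi>"
  shows "\<exists>c. exact_colouring X I B v c"
proof -
  have "finite X" and "card X = v"
    using bibd unfolding bibd_def by auto
  then obtain f :: "'a \<Rightarrow> nat" where f: "inj_on f X"
    using finite_imp_inj_to_nat_seg by blast
  have \<phi>: "\<forall>i\<in>I. \<phi> i \<in> X - B i" and nested_bij: "bij_betw (nested_pair \<phi>) (flags X I B) (two_subsets X)"
    using nesting unfolding perfect_nesting_iff[OF bibd] by auto
  define c where "c = case_sum f (f \<circ> \<phi>)"
  have colours: "c ` levi_vertices X I = f ` X"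
    using \<phi> unfolding c_def levi_vertices_def image_Un image_image by auto
  have "flag_colours c = image f \<circ> nested_pair \<phi>"
    unfolding c_def flag_colours_def nested_pair_def by auto
  then have "bij_betw (flag_colours c) (flags X I B) (two_subsets (f ` X))"
    using bij_betw_trans[OF nested_bij bij_betw_image_two_subsets[OF inj_on_imp_bij_betw[OF f]]]
    by simp
  then have "exact_colouring X I B v c"
    unfolding exact_colouring_iff colours using card_image[OF f] \<open>card X = v\<close> by simp
  then show ?thesis
    by blast
qed

lemma perfect_nesting_of_pairing:
  assumes bibd: "bibd X I B v k lam" and \<kappa>: "bij_betw \<kappa> X C" and d: "\<forall>i\<in>I. d i \<in> C"
    and pairing: "bij_betw (\<lambda>(x, i). {\<kappa> x, d i}) (flags X I B) (two_subsets C)"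
  shows "perfect_nesting X I B v k lam (\<lambda>i. inv_into X \<kappa> (d i))"
proof -
  define \<phi> where "\<phi> i = inv_into X \<kappa> (d i)" for i
  have \<sigma>: "bij_betw (inv_into X \<kappa>) C X"
    using \<kappa> by (rule bij_betw_inv_into)
  have \<phi>X: "\<phi> i \<in> X" and \<kappa>\<phi>: "\<kappa> (\<phi> i) = d i" if "i \<in> I" for i
    using that d bij_betwE[OF \<sigma>] bij_betw_inv_into_right[OF \<kappa>] unfolding \<phi>_def by auto
  have "\<phi> i \<notin> B i" if "i \<in> I" for i
  proof
    assume "\<phi> i \<in> B i"
    then have "(\<phi> i, i) \<in> flags X I B"
      using that \<phi>X unfolding flags_def by simp
    then have "{\<kappa> (\<phi> i), d i} \<in> two_subsets C"
      using bij_betwE[OF pairing] by fastforce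
    then show False
      using \<kappa>\<phi>[OF that] by (simp add: two_subsets_def)
  qed
  moreover have nested: "nested_pair \<phi> p = inv_into X \<kappa> ` (\<lambda>(x, i). {\<kappa> x, d i}) p"
    if "p \<in> flags X I B" for p
    using that bij_betw_inv_into_left[OF \<kappa>] unfolding nested_pair_def \<phi>_def flags_def by auto
  have "bij_betw (image (inv_into X \<kappa>) \<circ> (\<lambda>(x, i). {\<kappa> x, d i})) (flags X I B) (two_subsets X)"
    by (rule bij_betw_trans[OF pairing bij_betw_image_two_subsets[OF \<sigma>]])
  then have "bij_betw (nested_pair \<phi>) (flags X I B) (two_subsets X)"
    by (rule bij_betw_cong[THEN iffD1, rotated]) (simp add: nested)
  ultimately show ?thesis
    unfolding perfect_nesting_iff[OF bibd] \<phi>_def[symmetric] using \<phi>X by blast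
qed

lemma point_injective_exact_colouring_imp_perfect_nesting:
  assumes bibd: "bibd X I B v k lam" and exact: "exact_colouring X I B v c"
    and inj: "inj_on (\<lambda>x. c (Inl x)) X"
  shows "\<exists>\<phi>. perfect_nesting X I B v k lam \<phi>"
proof -
  let ?C = "c ` levi_vertices X I"
  have "finite X" "finite I" "card X = v"
    using bibd unfolding bibd_def by auto
  moreover have "(\<lambda>x. c (Inl x)) ` X \<subseteq> ?C"
    unfolding levi_vertices_def by auto
  ultimately have "(\<lambda>x. c (Inl x)) ` X = ?C"
    using exact card_image[OF inj]
    by (intro card_subset_eq) (auto simp: exact_colouring_iff finite_levi_vertices)
  then have \<kappa>: "bij_betw (\<lambda>x. c (Inl x)) X ?C"
    using inj by (simp add: bij_betw_def)
  have d: "\<forall>i\<in>I. c (Inr i) \<in> ?C"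
    unfolding levi_vertices_def by auto
  have "bij_betw (\<lambda>(x, i). {c (Inl x), c (Inr i)}) (flags X I B) (two_subsets ?C)"
    using exact unfolding exact_colouring_iff flag_colours_def by simp
  then show ?thesis
    using perfect_nesting_of_pairing[OF bibd \<kappa> d] by blast
qed

lemma bij_betw_image_if_meets:
  assumes involution: "\<And>t. s (s t) = t" and "s ` C \<subseteq> C" and fixed: "\<And>t. t \<in> T \<Longrightarrow> s t = t"
  shows "bij_betw (\<lambda>Q. if Q \<inter> T = {} then Q else s ` Q) (two_subsets C) (two_subsets C)"
    (is "bij_betw ?\<psi> _ _")
proof (rule bij_betw_byWitness[where f' = ?\<psi>])
  have "inj s"
    using involution by (metis injI)
  have image_iff_involution: "t \<in> s ` Q \<longleftrightarrow> s t \<in> Q" for t Q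
    by (metis image_iff involution)
  have meets: "s ` Q \<inter> T = Q \<inter> T" for Q
  proof (rule set_eqI)
    show "t \<in> s ` Q \<inter> T \<longleftrightarrow> t \<in> Q \<inter> T" for t
      using image_iff_involution[of t Q] fixed[of t] by auto
  qed
  have twice: "s ` s ` Q = Q" for Q
    by (simp add: image_image involution)
  have "?\<psi> (?\<psi> Q) = Q" for Q
    using meets twice by simp
  then show "\<forall>Q\<in>two_subsets C. ?\<psi> (?\<psi> Q) = Q" "\<forall>Q\<in>two_subsets C. ?\<psi> (?\<psi> Q) = Q"
    by simp_all
  have "s ` Q \<in> two_subsets C" if "Q \<in> two_subsets C" for Q
    using that \<open>s ` C \<subseteq> C\<close> \<open>inj s\<close> unfolding two_subsets_def
    by (auto simp: card_image inj_on_subset)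
  then show "?\<psi> ` two_subsets C \<subseteq> two_subsets C" "?\<psi> ` two_subsets C \<subseteq> two_subsets C"
    by auto
qed

lemma bij_betw_swap_if_meets:
  assumes "\<alpha> \<in> C" "\<zeta> \<in> C" "\<alpha> \<notin> T" "\<zeta> \<notin> T"
  shows "bij_betw (\<lambda>Q. if Q \<inter> T = {} then Q else id(\<alpha> := \<zeta>, \<zeta> := \<alpha>) ` Q)
    (two_subsets C) (two_subsets C)"
proof (rule bij_betw_image_if_meets)
  let ?s = "id(\<alpha> := \<zeta>, \<zeta> := \<alpha>)"
  show "?s (?s t) = t" for t
    by simp
  show "?s ` C \<subseteq> C"
    using assms(1,2) by (auto simp: image_subset_iff)
  show "?s t = t" if "t \<in> T" for t
    using that assms(3,4) by auto
qed

text \<open>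
  Read \<pi> as a tournament on C whose arc \<pi> i leaves p i. The arcs in J leave \<alpha>; their
  tails are moved to the sink \<zeta> by exchanging \<alpha> and \<zeta> in every pair that meets the
  other ends of these arcs (\<zeta> excepted).
\<close>

lemma move_tails_to_sink:
  assumes \<pi>: "bij_betw \<pi> I (two_subsets C)" and tail: "\<forall>i\<in>I. p i \<in> \<pi> i"
    and "\<alpha> \<in> C" "\<zeta> \<in> C" and sink: "\<zeta> \<notin> p ` I" and J: "J \<subseteq> {i\<in>I. p i = \<alpha>}"
  shows "\<exists>\<pi>'. bij_betw \<pi>' I (two_subsets C) \<and> (\<forall>i\<in>I. (if i \<in> J then \<zeta> else p i) \<in> \<pi>' i)"
proof -
  define h where "h i = the_elem (\<pi> i - {p i})" for i
  have head: "\<pi> i = {p i, h i} \<and> h i \<noteq> p i" if "i \<in> I" for i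
    using two_subset_eq_insert_other[OF bij_betwE[OF \<pi>, rule_format, OF that]] tail that
    unfolding h_def by auto
  define T where "T = h ` J - {\<zeta>}"
  have "h j \<noteq> \<alpha>" if "j \<in> J" for j
    using that J head[of j] by auto
  then have "\<alpha> \<notin> T"
    unfolding T_def by auto
  define sw where "sw = id(\<alpha> := \<zeta>, \<zeta> := \<alpha>)"
  have sw: "sw \<alpha> = \<zeta>" "\<And>t. t \<noteq> \<alpha> \<Longrightarrow> t \<noteq> \<zeta> \<Longrightarrow> sw t = t"
    unfolding sw_def by auto
  define \<psi> where "\<psi> Q = (if Q \<inter> T = {} then Q else sw ` Q)" for Q
  have \<psi>: "bij_betw \<psi> (two_subsets C) (two_subsets C)"
    using bij_betw_swap_if_meets[OF assms(3,4) \<open>\<alpha> \<notin> T\<close>] unfolding \<psi>_def[abs_def] sw_def T_def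
    by blast
  have "(if i \<in> J then \<zeta> else p i) \<in> \<psi> (\<pi> i)" if i: "i \<in> I" for i
  proof (cases "i \<in> J")
    case True
    then have "\<pi> i = {\<alpha>, h i}"
      using head i J by auto
    moreover have "h i = \<zeta>" if "\<pi> i \<inter> T = {}"
      using that True head[OF i] unfolding T_def by auto
    ultimately show ?thesis
      using True sw(1) unfolding \<psi>_def by auto
  next
    case False
    have "p i \<noteq> \<zeta>"
      using sink i by auto
    moreover have "p i \<noteq> \<alpha>" if "\<pi> i \<inter> T \<noteq> {}"
    proof
      assume "p i = \<alpha>"
      with that \<open>\<alpha> \<notin> T\<close> head[OF i] obtain j where "j \<in> J" "h i = h j"
        unfolding T_def by auto
      then have "\<pi> i = \<pi> j"
        using head i J \<open>p i = \<alpha>\<close> by auto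
      then show False
        using bij_betw_imp_inj_on[OF \<pi>] i J \<open>j \<in> J\<close> False by (auto dest: inj_onD)
    qed
    ultimately show ?thesis
      using False head[OF i] sw(2) unfolding \<psi>_def by (auto simp: image_iff)
  qed
  then show ?thesis
    using bij_betw_trans[OF \<pi> \<psi>] by (intro exI[of _ "\<psi> \<circ> \<pi>"]) simp
qed

lemma bij_betw_singleton_flags:
  assumes "\<forall>i\<in>I. B i = {pt i} \<and> pt i \<in> X"
  shows "bij_betw (\<lambda>i. (pt i, i)) I (flags X I B)"
  using assms unfolding bij_betw_def inj_on_def flags_def by auto

lemma perfect_nesting_of_singleton_pairing:
  assumes bibd: "bibd X I B v k lam" and blocks: "\<forall>i\<in>I. B i = {pt i}"
    and \<kappa>: "bij_betw \<kappa> X C" and \<pi>: "bij_betw \<pi> I (two_subsets C)" and tail: "\<forall>i\<in>I. \<kappa> (pt i) \<in> \<pi> i"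
  shows "\<exists>\<phi>. perfect_nesting X I B v k lam \<phi>"
proof -
  define d where "d i = the_elem (\<pi> i - {\<kappa> (pt i)})" for i
  have \<pi>_eq: "\<pi> i = {\<kappa> (pt i), d i}" and d: "d i \<in> C" if "i \<in> I" for i
    using two_subset_eq_insert_other(1,3)[OF bij_betwE[OF \<pi>, rule_format, OF that]] tail that
    unfolding d_def by auto
  have "\<forall>i\<in>I. B i = {pt i} \<and> pt i \<in> X"
    using bibd blocks unfolding bibd_def by auto
  then have flags: "bij_betw (\<lambda>i. (pt i, i)) I (flags X I B)"
    by (rule bij_betw_singleton_flags)
  have "bij_betw ((\<lambda>(x, i). {\<kappa> x, d i}) \<circ> (\<lambda>i. (pt i, i))) I (two_subsets C)"
    by (rule bij_betw_cong[THEN iffD1, OF _ \<pi>]) (simp add: \<pi>_eq)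
  then have "bij_betw (\<lambda>(x, i). {\<kappa> x, d i}) (flags X I B) (two_subsets C)"
    unfolding bij_betw_comp_iff[OF flags, symmetric] .
  then show ?thesis
    using perfect_nesting_of_pairing[OF bibd \<kappa>] d by blast
qed

lemma exact_colouring_non_point_colour_unique:
  assumes "exact_colouring X I B v c"
    and "a \<in> c ` levi_vertices X I" "b \<in> c ` levi_vertices X I"
    and "a \<notin> (\<lambda>x. c (Inl x)) ` X" "b \<notin> (\<lambda>x. c (Inl x)) ` X"
  shows "a = b"
proof (rule ccontr)
  assume "a \<noteq> b"
  then have "{a, b} \<in> two_subsets (c ` levi_vertices X I)"
    using assms(2,3) unfolding two_subsets_iff by blast
  moreover have "flag_colours c ` flags X I B = two_subsets (c ` levi_vertices X I)"
    using assms(1) unfolding exact_colouring_iff by (simp add: bij_betw_imp_surj_on)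
  ultimately have "{a, b} \<in> flag_colours c ` flags X I B"
    by simp
  then obtain x i where "x \<in> X" "{a, b} = {c (Inl x), c (Inr i)}"
    unfolding flags_def flag_colours_def by auto
  then show False
    using assms(4,5) by (auto simp: doubleton_eq_iff)
qed

lemma harmonious_levi_block_points_distinct:
  assumes "harmonious (levi_vertices X I) (levi_edges X I B) c"
    and "i \<in> I" "x \<in> X" "y \<in> X" "x \<in> B i" "y \<in> B i" and "c (Inl x) = c (Inl y)"
  shows "x = y"
proof -
  have "flag_colours c (x, i) = flag_colours c (y, i)"
    using assms(7) by (simp add: flag_colours_def)
  then show ?thesis
    using assms(1-6) unfolding harmonious_levi_iff inj_on_def flags_def by blast
qed

lemma bij_betw_fun_upd_collision:
  assumes "finite X" "x \<in> X" "y \<in> X" "x \<noteq> y" "f x = f y"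
    and "C = insert \<zeta> (f ` X)" "card C = card X"
  shows "bij_betw (f(y := \<zeta>)) X C"
proof -
  have "f y \<in> f ` (X - {y})"
    by (rule rev_image_eqI[of x]) (use assms(2,4,5) in auto)
  have "f ` X = insert (f y) (f ` (X - {y}))"
    using assms(3) by (metis image_insert insert_Diff)
  also have "\<dots> = f ` (X - {y})"
    using \<open>f y \<in> f ` (X - {y})\<close> by (rule insert_absorb)
  finally have "f(y := \<zeta>) ` X = C"
    using assms(3,6) by (simp only: fun_upd_image if_True)
  then show ?thesis
    using assms(1,7) by (simp add: bij_betw_def eq_card_imp_inj_on)
qed

lemma bibd_lam_0_card_block_le_1:
  assumes bibd: "bibd X I B v k 0" and "i \<in> I"
  shows "card (B i) \<le> 1"
proof -
  have "finite X" "finite I" and blocks: "\<forall>i\<in>I. B i \<subseteq> X"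
    and pairs: "\<forall>a\<in>X. \<forall>b\<in>X. a \<noteq> b \<longrightarrow> card {i\<in>I. a \<in> B i \<and> b \<in> B i} = 0"
    using bibd unfolding bibd_def by auto
  have "a = b" if "a \<in> B i" "b \<in> B i" for a b
  proof (rule ccontr)
    assume "a \<noteq> b"
    then have "card {j\<in>I. a \<in> B j \<and> b \<in> B j} = 0"
      using pairs blocks \<open>i \<in> I\<close> that by auto
    moreover have "i \<in> {j\<in>I. a \<in> B j \<and> b \<in> B j}"
      using \<open>i \<in> I\<close> that by simp
    moreover have "finite {j\<in>I. a \<in> B j \<and> b \<in> B j}"
      using \<open>finite I\<close> by simp
    ultimately show False
      using card_0_eq by blast
  qed
  moreover have "finite (B i)"
    using blocks \<open>i \<in> I\<close> \<open>finite X\<close> finite_subset by blast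
  ultimately show ?thesis
    using card_le_Suc0_iff_eq by (metis One_nat_def)
qed

lemma exact_colouring_collision_imp_singleton_blocks:
  assumes bibd: "bibd X I B v k lam" and exact: "exact_colouring X I B v c"
    and "x \<in> X" "y \<in> X" "x \<noteq> y" "c (Inl x) = c (Inl y)"
  shows "\<forall>i\<in>I. card (B i) = 1"
proof -
  have "finite X" "finite I" "card X = v" and blocks: "\<forall>i\<in>I. B i \<subseteq> X \<and> card (B i) = k"
    and pairs: "\<forall>a\<in>X. \<forall>b\<in>X. a \<noteq> b \<longrightarrow> card {i\<in>I. a \<in> B i \<and> b \<in> B i} = lam"
    using bibd unfolding bibd_def by auto
  have harmonious: "harmonious (levi_vertices X I) (levi_edges X I B) c"
    using exact unfolding exact_colouring_def by simp
  have "{i\<in>I. x \<in> B i \<and> y \<in> B i} = {}"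
    using harmonious_levi_block_points_distinct[OF harmonious] assms(3-6) by blast
  moreover have "card {i\<in>I. x \<in> B i \<and> y \<in> B i} = lam"
    using pairs assms(3-5) by blast
  ultimately have "lam = 0"
    by (metis card.empty)
  have k_le_1: "k \<le> 1" if "i \<in> I" for i
    using bibd_lam_0_card_block_le_1[of X I B v k i] bibd \<open>lam = 0\<close> blocks that by simp
  have "card {x, y} \<le> card X"
    by (rule card_mono) (use \<open>finite X\<close> assms(3,4) in auto)
  then have "0 < card (flags X I B)"
    using card_flags_exact_colouring[OF \<open>finite X\<close> \<open>finite I\<close> exact] \<open>card X = v\<close> assms(5)
    by simp
  then obtain x' i where "x' \<in> B i" "i \<in> I"
    unfolding flags_def by (auto simp: card_gt_0_iff)
  then have "k \<noteq> 0"
    using blocks \<open>finite X\<close> by (metis card_0_eq empty_iff finite_subset)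
  then show ?thesis
    using blocks k_le_1[OF \<open>i \<in> I\<close>] by auto
qed

lemma point_colour_collision_imp_perfect_nesting:
  assumes bibd: "bibd X I B v k lam" and exact: "exact_colouring X I B v c"
    and "\<not> inj_on (\<lambda>x. c (Inl x)) X"
  shows "\<exists>\<phi>. perfect_nesting X I B v k lam \<phi>"
proof -
  let ?C = "c ` levi_vertices X I" and ?P = "(\<lambda>x. c (Inl x)) ` X"
  obtain x y where xy: "x \<in> X" "y \<in> X" "x \<noteq> y" "c (Inl x) = c (Inl y)"
    using assms(3) unfolding inj_on_def by blast
  have "finite X" "finite I" "card X = v" "\<forall>i\<in>I. B i \<subseteq> X"
    using bibd unfolding bibd_def by auto
  have C: "card ?C = v" "bij_betw (flag_colours c) (flags X I B) (two_subsets ?C)"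
    using exact unfolding exact_colouring_iff by auto
  obtain pt where blocks: "\<forall>i\<in>I. B i = {pt i}"
    using exact_colouring_collision_imp_singleton_blocks[OF bibd exact xy]
    unfolding One_nat_def card_1_singleton_iff by metis
  have "?P \<subseteq> ?C"
    unfolding levi_vertices_def by auto
  moreover have "card ?P < card ?C"
    using assms(3) \<open>finite X\<close> \<open>card X = v\<close> C(1) card_image_le[of X] inj_on_iff_eq_card[of X]
    by (metis le_neq_implies_less)
  ultimately have "?C - ?P \<noteq> {}"
    by (metis Diff_eq_empty_iff less_irrefl subset_antisym)
  then obtain \<zeta> where \<zeta>: "\<zeta> \<in> ?C" "\<zeta> \<notin> ?P"
    by blast
  then have "?C = insert \<zeta> ?P"
    using exact_colouring_non_point_colour_unique[OF exact] \<open>?P \<subseteq> ?C\<close> by blast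
  moreover have "card ?C = card X"
    using C(1) \<open>card X = v\<close> by simp
  ultimately have \<kappa>: "bij_betw ((\<lambda>z. c (Inl z))(y := \<zeta>)) X ?C"
    by (rule bij_betw_fun_upd_collision[OF \<open>finite X\<close> xy])
  have "bij_betw (flag_colours c \<circ> (\<lambda>i. (pt i, i))) I (two_subsets ?C)"
    using blocks \<open>\<forall>i\<in>I. B i \<subseteq> X\<close> by (intro bij_betw_trans[OF bij_betw_singleton_flags C(2)]) auto
  moreover have "\<forall>i\<in>I. c (Inl (pt i)) \<in> (flag_colours c \<circ> (\<lambda>i. (pt i, i))) i"
    by (simp add: flag_colours_def)
  moreover have "c (Inl y) \<in> ?C"
    unfolding levi_vertices_def using xy by auto
  moreover have "\<zeta> \<notin> (\<lambda>i. c (Inl (pt i))) ` I"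
    using \<zeta> blocks \<open>\<forall>i\<in>I. B i \<subseteq> X\<close> by auto
  ultimately obtain \<pi> where \<pi>: "bij_betw \<pi> I (two_subsets ?C)"
    and "\<forall>i\<in>I. (if i \<in> {j\<in>I. pt j = y} then \<zeta> else c (Inl (pt i))) \<in> \<pi> i"
    using move_tails_to_sink[of _ I ?C "\<lambda>i. c (Inl (pt i))" "c (Inl y)" \<zeta> "{j\<in>I. pt j = y}"] \<zeta>(1)
    by blast
  then have "\<forall>i\<in>I. ((\<lambda>z. c (Inl z))(y := \<zeta>)) (pt i) \<in> \<pi> i"
    by auto
  then show ?thesis
    using perfect_nesting_of_singleton_pairing[OF bibd blocks \<kappa> \<pi>] by blast
qed

theorem theorem5p2:
  fixes X :: "'a set" and I :: "'b set" and B :: "'b \<Rightarrow> 'a set" and v k lam :: nat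
  assumes "bibd X I B v k lam"
  shows "(\<exists>\<phi>. perfect_nesting X I B v k lam \<phi>) \<longleftrightarrow>
         (banff X I B v \<and> (\<exists>c. exact_colouring X I B v c))"
proof
  assume "\<exists>\<phi>. perfect_nesting X I B v k lam \<phi>"
  then obtain c where c: "exact_colouring X I B v c"
    using perfect_nesting_imp_exact_colouring[OF assms] by blast
  have "finite X" "finite I"
    using assms unfolding bibd_def by auto
  with c show "banff X I B v \<and> (\<exists>c. exact_colouring X I B v c)"
    using exact_colouring_imp_banff by blast
next
  assume "banff X I B v \<and> (\<exists>c. exact_colouring X I B v c)"
  then obtain c where "exact_colouring X I B v c"
    by blast
  then show "\<exists>\<phi>. perfect_nesting X I B v k lam \<phi>"
    using point_injective_exact_colouring_imp_perfect_nesting[OF assms]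
      point_colour_collision_imp_perfect_nesting[OF assms] by blast
qed

end
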